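(* Let $g$ be a graphon which maximizes $\mathcal S$ among all graphons with the same degree function (i.e. $\mathcal S(g)\ge\mathcal S(h)$ for every graphon $h$ with $d_h=d_g$ a.e.), and suppose the degree function $d_g$ takes only $M$ distinct values. Then $g$ is $M$-podal; more precisely, if $V_1,\dots,V_M$ are the level sets of $d_g$, then $g$ is almost everywhere constant on each $V_i\times V_j$.
   Context: A graphon is a symmetric measurable function $g:[0,1]^2\to[0,1]$. Its degree function is $d_g(x)=\int_0^1 g(x,y)\,dy$. The Shannon entropy is $\mathcal S(g)=\frac12\int_{[0,1]^2}S(g(x,y))\,dx\,dy$ with $S(w)=-w\ln w-(1-w)\ln(1-w)$. A graphon $g$ is $M$-podal if there is a partition of $[0,1]$ into at most $M$ measurable sets $V_1,\dots,V_m$ such that $g$ is almost everywhere constant on each $V_i\times V_j$. *)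

theory Defs
  imports "HOL-Analysis.Analysis"
begin

text \<open>Measurability is Borel measurability of the uncurried function on the plane
  (only values on the unit square matter).\<close>
definition graphon :: "(real \<Rightarrow> real \<Rightarrow> real) \<Rightarrow> bool" where
  "graphon g \<longleftrightarrow>
     (\<lambda>(x, y). g x y) \<in> borel_measurable (lborel \<Otimes>\<^sub>M lborel) \<and>
     (\<forall>x\<in>{0..1}. \<forall>y\<in>{0..1}. 0 \<le> g x y \<and> g x y \<le> 1 \<and> g x y = g y x)"

definition degree_fun :: "(real \<Rightarrow> real \<Rightarrow> real) \<Rightarrow> real \<Rightarrow> real" where
  "degree_fun g x = (LINT y:{0..1}|lborel. g x y)"

text \<open>S(w) = -w ln w - (1-w) ln(1-w)  (with 0 ln 0 = 0, automatic since 0 * _ = 0).\<close>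
definition S_ent :: "real \<Rightarrow> real" where
  "S_ent w = - w * ln w - (1 - w) * ln (1 - w)"

definition entropy :: "(real \<Rightarrow> real \<Rightarrow> real) \<Rightarrow> real" where
  "entropy g = (1/2) * (LINT p:({0..1} \<times> {0..1})|(lborel \<Otimes>\<^sub>M lborel). S_ent (g (fst p) (snd p)))"

definition podal :: "nat \<Rightarrow> (real \<Rightarrow> real \<Rightarrow> real) \<Rightarrow> bool" where
  "podal M g \<longleftrightarrow> (\<exists>m V. m \<le> M \<and> (\<forall>i<m. V i \<in> sets lebesgue) \<and>
      (\<Union>i<m. V i) = {0..1} \<and> (\<forall>i<m. \<forall>j<m. i \<noteq> j \<longrightarrow> V i \<inter> V j = {}) \<and>
      (\<forall>i<m. \<forall>j<m. \<exists>c. AE p in lborel \<Otimes>\<^sub>M lborel.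
          fst p \<in> V i \<and> snd p \<in> V j \<longrightarrow> g (fst p) (snd p) = c))"

end

theory Submission
  imports Defs
begin

(* Partition [0,1] into the level sets V_a of the degree function
   d_g and replace g on every block V_a x V_b by its average there.  The resulting step graphon
   is again a graphon, and its degree at x in V_a is the average of d_g over V_a, i.e. again a;
   so it competes with g.  On the other hand S is strictly concave, so by Jensen's inequality
   averaging on a block never decreases the entropy and strictly increases it unless g is a.e.
   constant on the block.  Maximality of g therefore forces g to be a.e. constant on every
   block, which is the M-podal structure. *)

lemma ln_less_minus_one:
  fixes x :: real
  assumes "0 < x" "x \<noteq> 1"
  shows "ln x < x - 1"
  using ln_le_minus_one[of x] ln_eq_minus_one[of x] assms by linarith

lemma xlnx_tangent:
  fixes w c :: real
  assumes "0 < c" "0 \<le> w"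
  shows "w - c \<le> w * ln w - w * ln c"
    and "w \<noteq> c \<Longrightarrow> w - c < w * ln w - w * ln c"
proof -
  have "w - c \<le> w * ln w - w * ln c \<and> (w \<noteq> c \<longrightarrow> w - c < w * ln w - w * ln c)"
  proof (cases "w = 0")
    case False
    with assms have w: "0 < w" by simp
    have gap: "w * ln w - w * ln c - (w - c) = w * ((c / w - 1) - ln (c / w))"
      using w assms by (simp add: ln_div field_simps)
    have "0 \<le> (c / w - 1) - ln (c / w)"
      using ln_le_minus_one[of "c / w"] w assms by simp
    moreover have "w \<noteq> c \<Longrightarrow> 0 < (c / w - 1) - ln (c / w)"
      using ln_less_minus_one[of "c / w"] w assms by simp
    ultimately show ?thesis
      using gap w by (metis diff_gt_0_iff_gt diff_ge_0_iff_ge mult_nonneg_nonneg mult_pos_pos less_imp_le)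
  qed (use assms in simp)
  then show "w - c \<le> w * ln w - w * ln c" and "w \<noteq> c \<Longrightarrow> w - c < w * ln w - w * ln c"
    by auto
qed

(* S is strictly concave on [0,1]: its graph lies strictly below every tangent line at an
   interior point c, except at c itself. *)
lemma S_ent_tangent:
  fixes c w :: real
  assumes "0 < c" "c < 1" "0 \<le> w" "w \<le> 1"
  shows "S_ent w \<le> S_ent c + (ln (1 - c) - ln c) * (w - c)"
    and "w \<noteq> c \<Longrightarrow> S_ent w < S_ent c + (ln (1 - c) - ln c) * (w - c)"
proof -
  have gap: "S_ent c + (ln (1 - c) - ln c) * (w - c) - S_ent w
      = (w * ln w - w * ln c) + ((1 - w) * ln (1 - w) - (1 - w) * ln (1 - c))"
    unfolding S_ent_def by (simp add: algebra_simps)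
  have one: "(1 - w) - (1 - c) \<le> (1 - w) * ln (1 - w) - (1 - w) * ln (1 - c)"
    using xlnx_tangent(1)[of "1 - c" "1 - w"] assms by simp
  show "S_ent w \<le> S_ent c + (ln (1 - c) - ln c) * (w - c)"
    using gap one xlnx_tangent(1)[of c w] assms by linarith
  show "S_ent w < S_ent c + (ln (1 - c) - ln c) * (w - c)" if "w \<noteq> c"
    using gap one xlnx_tangent(2)[of c w] that assms by linarith
qed

lemma S_ent_nonneg:
  fixes w :: real
  assumes "0 \<le> w" "w \<le> 1"
  shows "0 \<le> S_ent w"
proof -
  have xlnx_nonpos: "x * ln x \<le> 0" if "0 \<le> x" "x \<le> 1" for x :: real
    using that by (cases "x = 0") (simp_all add: mult_nonneg_nonpos)
  have "w * ln w \<le> 0" "(1 - w) * ln (1 - w) \<le> 0"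
    using xlnx_nonpos assms by simp_all
  then show ?thesis unfolding S_ent_def by simp
qed

(* The maximum of S is S(1/2) = ln 2 < 1, read off from the horizontal tangent at 1/2. *)
lemma S_ent_le_one:
  fixes w :: real
  assumes "0 \<le> w" "w \<le> 1"
  shows "S_ent w \<le> 1"
proof -
  have "S_ent w \<le> S_ent (1/2)"
    using S_ent_tangent(1)[of "1/2" w] assms by simp
  also have "S_ent (1/2) = ln 2"
    by (simp add: S_ent_def ln_div)
  finally show ?thesis using ln_2_less_1 by simp
qed

lemma S_ent_measurable[measurable]: "S_ent \<in> borel_measurable borel"
  unfolding S_ent_def by measurable

lemma integrable_indicator_times_bounded:
  fixes M :: "'a measure" and F :: "'a \<Rightarrow> real"
  assumes [measurable]: "B \<in> sets M" "F \<in> borel_measurable M"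
    and "emeasure M B < \<infinity>" and "\<And>x. x \<in> B \<Longrightarrow> \<bar>F x\<bar> \<le> K"
  shows "integrable M (\<lambda>x. indicator B x * F x)"
  by (rule integrableI_bounded_set[where A = B and B = K]) (use assms in \<open>auto\<close>)

(* A [0,1]-valued function whose average over B is 0 or 1 is a.e. equal to that value on B,
   since (1 - 2c)(f - c) = |f - c| there and its integral vanishes. *)
lemma ae_const_of_extreme_average:
  fixes M :: "'a measure" and f :: "'a \<Rightarrow> real"
  assumes [measurable]: "B \<in> sets M" "f \<in> borel_measurable M"
    and fin: "emeasure M B < \<infinity>"
    and rng: "\<And>x. x \<in> B \<Longrightarrow> 0 \<le> f x \<and> f x \<le> 1"
    and avg: "(\<integral>x. indicator B x * f x \<partial>M) = c * measure M B"
    and extreme: "c = 0 \<or> c = 1"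
  shows "AE x in M. x \<in> B \<longrightarrow> f x = c"
proof -
  define D where "D x = indicator B x * ((1 - 2 * c) * (f x - c))" for x
  have D_abs: "D x = indicator B x * \<bar>f x - c\<bar>" for x
    using extreme rng[of x] by (cases "x \<in> B") (auto simp: D_def)
  have int_f: "integrable M (\<lambda>x. indicator B x * f x)"
    by (rule integrable_indicator_times_bounded[where K = 1]) (use rng fin in auto)
  have int_B: "integrable M (indicator B :: 'a \<Rightarrow> real)"
    using fin by (simp add: integrable_indicator_iff)
  have D_eq: "D = (\<lambda>x. (1 - 2 * c) * (indicator B x * f x) - ((1 - 2 * c) * c) * indicator B x)"
    by (rule ext) (simp add: D_def algebra_simps)
  have int_D: "integrable M D"
    unfolding D_eq using int_f int_B by simp
  have "integral\<^sup>L M D = (1 - 2 * c) * (c * measure M B) - ((1 - 2 * c) * c) * measure M B"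
    unfolding D_eq using int_f int_B avg by simp
  then have "integral\<^sup>L M D = 0" by simp
  then have "AE x in M. D x = 0"
    using integral_nonneg_eq_0_iff_AE[OF int_D] by (simp add: D_abs)
  then show ?thesis
    by eventually_elim (auto simp: D_abs indicator_def)
qed

(* Jensen's inequality for S on a set B, for an interior average c: integrate the tangent
   inequality.  Equality forces f = c a.e. on B by strictness of the tangent bound. *)
lemma entropy_jensen_interior:
  fixes M :: "'a measure" and f :: "'a \<Rightarrow> real"
  assumes [measurable]: "B \<in> sets M" "f \<in> borel_measurable M"
    and fin: "emeasure M B < \<infinity>"
    and rng: "\<And>x. x \<in> B \<Longrightarrow> 0 \<le> f x \<and> f x \<le> 1"
    and avg: "(\<integral>x. indicator B x * f x \<partial>M) = c * measure M B"
    and c: "0 < c" "c < 1"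
  shows "(\<integral>x. indicator B x * S_ent (f x) \<partial>M) \<le> measure M B * S_ent c"
    and "(\<integral>x. indicator B x * S_ent (f x) \<partial>M) = measure M B * S_ent c \<Longrightarrow>
           AE x in M. x \<in> B \<longrightarrow> f x = c"
proof -
  define L where "L = ln (1 - c) - ln c"
  define D where "D x = indicator B x * (S_ent c + L * (f x - c) - S_ent (f x))" for x
  have int_f: "integrable M (\<lambda>x. indicator B x * f x)"
    by (rule integrable_indicator_times_bounded[where K = 1]) (use rng fin in auto)
  have int_S: "integrable M (\<lambda>x. indicator B x * S_ent (f x))"
  proof (rule integrable_indicator_times_bounded[where K = 1])
    show "\<bar>S_ent (f x)\<bar> \<le> 1" if "x \<in> B" for x
      using S_ent_nonneg[of "f x"] S_ent_le_one[of "f x"] rng[OF that] by simp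
  qed (use fin in simp_all)
  have int_B: "integrable M (indicator B :: 'a \<Rightarrow> real)"
    using fin by (simp add: integrable_indicator_iff)
  have D_eq: "D = (\<lambda>x. (S_ent c - L * c) * indicator B x + L * (indicator B x * f x)
                    - indicator B x * S_ent (f x))"
    by (rule ext) (simp add: D_def algebra_simps)
  have int_D: "integrable M D"
    unfolding D_eq using int_f int_S int_B
    by (intro Bochner_Integration.integrable_diff Bochner_Integration.integrable_add
        integrable_mult_right)
  have "integral\<^sup>L M D = (S_ent c - L * c) * measure M B + L * (c * measure M B)
      - (\<integral>x. indicator B x * S_ent (f x) \<partial>M)"
    unfolding D_eq using int_f int_S int_B avg
    by (simp add: Bochner_Integration.integral_diff Bochner_Integration.integral_add
        integrable_mult_right del: integral_mult_right_zero)
  then have integral_D: "integral\<^sup>L M D = measure M B * S_ent c - (\<integral>x. indicator B x * S_ent (f x) \<partial>M)"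
    by (simp add: algebra_simps)
  have D_nonneg: "0 \<le> D x" for x
  proof (cases "x \<in> B")
    case True
    have "S_ent (f x) \<le> S_ent c + L * (f x - c)"
      unfolding L_def using S_ent_tangent(1)[of c "f x"] c rng[OF True] by blast
    then show ?thesis using True by (simp add: D_def)
  qed (simp add: D_def)
  have "0 \<le> integral\<^sup>L M D"
    using D_nonneg by (rule Bochner_Integration.integral_nonneg)
  then show "(\<integral>x. indicator B x * S_ent (f x) \<partial>M) \<le> measure M B * S_ent c"
    using integral_D by linarith
  assume "(\<integral>x. indicator B x * S_ent (f x) \<partial>M) = measure M B * S_ent c"
  then have "integral\<^sup>L M D = 0"
    using integral_D by linarith
  moreover have "AE x in M. 0 \<le> D x"
    using D_nonneg by simp
  ultimately have "AE x in M. D x = 0"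
    using integral_nonneg_eq_0_iff_AE[OF int_D] by simp
  then show "AE x in M. x \<in> B \<longrightarrow> f x = c"
  proof eventually_elim
    case (elim x)
    show ?case
    proof (intro impI, rule ccontr)
      assume "x \<in> B" "f x \<noteq> c"
      then have "S_ent (f x) < S_ent c + L * (f x - c)"
        unfolding L_def using S_ent_tangent(2)[of c "f x"] c rng[OF \<open>x \<in> B\<close>] by blast
      then have "0 < D x"
        using \<open>x \<in> B\<close> by (simp add: D_def)
      then show False using elim by simp
    qed
  qed
qed

(* Null sets and the extreme averages 0, 1 are the degenerate cases. *)
lemma entropy_jensen_block:
  fixes M :: "'a measure" and f :: "'a \<Rightarrow> real"
  assumes B[measurable]: "B \<in> sets M" and f[measurable]: "f \<in> borel_measurable M"
    and fin: "emeasure M B < \<infinity>"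
    and rng: "\<And>x. x \<in> B \<Longrightarrow> 0 \<le> f x \<and> f x \<le> 1"
    and c: "c = (\<integral>x. indicator B x * f x \<partial>M) / measure M B"
  shows "(\<integral>x. indicator B x * S_ent (f x) \<partial>M) \<le> measure M B * S_ent c"
    and "(\<integral>x. indicator B x * S_ent (f x) \<partial>M) = measure M B * S_ent c \<Longrightarrow>
           AE x in M. x \<in> B \<longrightarrow> f x = c"
proof -
  let ?IS = "\<integral>x. indicator B x * S_ent (f x) \<partial>M"
  have "?IS \<le> measure M B * S_ent c \<and> (?IS = measure M B * S_ent c \<longrightarrow> (AE x in M. x \<in> B \<longrightarrow> f x = c))"
  proof (cases "measure M B = 0")
    case True
    then have "B \<in> null_sets M"
      using fin by (simp add: emeasure_eq_ennreal_measure null_sets_def)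
    then have null: "AE x in M. x \<notin> B" by (rule AE_not_in)
    then have "?IS = 0" by (intro integral_eq_zero_AE) auto
    with True null show ?thesis by auto
  next
    case False
    then have pos: "0 < measure M B" by (simp add: order_less_le)
    have IF: "(\<integral>x. indicator B x * f x \<partial>M) = c * measure M B"
      using c pos by simp
    have int_f: "integrable M (\<lambda>x. indicator B x * f x)"
      by (rule integrable_indicator_times_bounded[where K = 1]) (use rng fin in auto)
    have int_B: "integrable M (indicator B :: 'a \<Rightarrow> real)"
      using fin by (simp add: integrable_indicator_iff)
    have "0 \<le> (\<integral>x. indicator B x * f x \<partial>M)"
      using rng by (intro Bochner_Integration.integral_nonneg) (auto simp: indicator_def)
    moreover have "(\<integral>x. indicator B x * f x \<partial>M) \<le> (\<integral>x. indicator B x \<partial>M)"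
      by (rule integral_mono[OF int_f int_B]) (use rng in \<open>auto simp: indicator_def\<close>)
    ultimately have c01: "0 \<le> c" "c \<le> 1"
      using IF pos B by (auto simp: sets.sets_into_space Int_absorb2 mult_le_cancel_right1 zero_le_mult_iff)
    show ?thesis
    proof (cases "c = 0 \<or> c = 1")
      case True
      have ae: "AE x in M. x \<in> B \<longrightarrow> f x = c"
        by (rule ae_const_of_extreme_average[OF B f fin rng IF True])
      have "?IS = (\<integral>x. indicator B x * S_ent c \<partial>M)"
        by (rule integral_cong_AE) (use ae in \<open>auto simp: indicator_def\<close>)
      also have "\<dots> = measure M B * S_ent c"
        using B by (simp add: sets.sets_into_space Int_absorb2)
      finally show ?thesis using ae by simp
    next
      case False
      then show ?thesis
        using entropy_jensen_interior[OF B f fin rng IF] c01 by (simp add: less_le)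
    qed
  qed
  then show "?IS \<le> measure M B * S_ent c"
    and "?IS = measure M B * S_ent c \<Longrightarrow> AE x in M. x \<in> B \<longrightarrow> f x = c"
    by auto
qed

abbreviation plane :: "(real \<times> real) measure" where
  "plane \<equiv> lborel \<Otimes>\<^sub>M lborel"

lemma graphon_measurable[measurable]:
  "graphon g \<Longrightarrow> (\<lambda>p. g (fst p) (snd p)) \<in> borel_measurable plane"
  unfolding graphon_def by (simp add: split_beta')

lemma degree_fun_measurable:
  assumes "graphon g"
  shows "degree_fun g \<in> borel_measurable lborel"
proof -
  have "(\<lambda>x. \<integral>y. indicator {0..1} y * g x y \<partial>lborel) \<in> borel_measurable lborel"
    using graphon_measurable[OF assms]
    by (intro lborel.borel_measurable_lebesgue_integral) (simp add: split_beta')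
  then show ?thesis
    by (simp add: degree_fun_def[abs_def] set_lebesgue_integral_def)
qed

lemma degree_fun_eq: "degree_fun h x = (\<integral>y. indicator {0..1} y * h x y \<partial>lborel)"
  by (simp add: degree_fun_def set_lebesgue_integral_def)

(* A graphon together with a labelling of [0,1] by finitely many labels with measurable
   level sets ("cells").  The theorem is the case where the label is the degree itself. *)
locale labelled_graphon =
  fixes g :: "real \<Rightarrow> real \<Rightarrow> real" and lab :: "real \<Rightarrow> 'a"
  assumes graphon: "graphon g"
    and finite_labels: "finite (lab ` {0..1})"
    and cell_measurable: "\<And>a. {x \<in> {0..1}. lab x = a} \<in> sets lborel"
begin

abbreviation labels :: "'a set" where
  "labels \<equiv> lab ` {0..1}"

definition cell :: "'a \<Rightarrow> real set" where
  "cell a = {x \<in> {0..1}. lab x = a}"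

definition cell_size :: "'a \<Rightarrow> real" where
  "cell_size a = measure lborel (cell a)"

lemma g_measurable[measurable]: "(\<lambda>p. g (fst p) (snd p)) \<in> borel_measurable plane"
  using graphon by (rule graphon_measurable)

lemma g_range: "x \<in> {0..1} \<Longrightarrow> y \<in> {0..1} \<Longrightarrow> 0 \<le> g x y \<and> g x y \<le> 1"
  and g_sym: "x \<in> {0..1} \<Longrightarrow> y \<in> {0..1} \<Longrightarrow> g x y = g y x"
  using graphon unfolding graphon_def by blast+

lemma cell_sets[measurable]: "cell a \<in> sets lborel"
  unfolding cell_def by (rule cell_measurable)

lemma cell_sets_borel[simp]: "cell a \<in> sets borel"
  using cell_sets by simp

lemma cell_subset: "cell a \<subseteq> {0..1}"
  unfolding cell_def by auto

lemma emeasure_cell: "emeasure lborel (cell a) = ennreal (cell_size a)"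
proof -
  have "emeasure lborel (cell a) \<le> emeasure lborel {0..1::real}"
    using cell_subset by (intro emeasure_mono) auto
  then show ?thesis
    unfolding cell_size_def by (intro emeasure_eq_ennreal_measure) (auto simp: top_unique)
qed

lemma cell_size_nonneg: "0 \<le> cell_size a"
  unfolding cell_size_def by simp

lemma block_sets[measurable]: "cell a \<times> cell b \<in> sets plane"
  by (intro pair_measureI cell_sets)

lemma emeasure_block: "emeasure plane (cell a \<times> cell b) = ennreal (cell_size a * cell_size b)"
  using lborel.emeasure_pair_measure_Times[OF cell_sets cell_sets, of a b]
  by (simp add: emeasure_cell ennreal_mult[OF cell_size_nonneg cell_size_nonneg])

lemma measure_block: "measure plane (cell a \<times> cell b) = cell_size a * cell_size b"
  using emeasure_block cell_size_nonneg
  by (simp add: measure_def)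

lemma block_subset: "p \<in> cell a \<times> cell b \<Longrightarrow> fst p \<in> {0..1} \<and> snd p \<in> {0..1}"
  using cell_subset by (auto simp: mem_Times_iff subset_iff)

lemma sum_cells: "x \<in> {0..1} \<Longrightarrow> (\<Sum>a\<in>labels. indicator (cell a) x * F a) = (F (lab x) :: real)"
proof -
  assume x: "x \<in> {0..1}"
  have "(\<Sum>a\<in>labels. indicator (cell a) x * F a) = (\<Sum>a\<in>labels. if lab x = a then F a else 0)"
    using x by (intro sum.cong) (auto simp: cell_def)
  also have "\<dots> = F (lab x)"
    using finite_labels x by (simp add: sum.delta)
  finally show ?thesis .
qed

lemma sum_indicator_cells: "(\<Sum>a\<in>labels. indicator (cell a) x) = (indicator {0..1} x :: real)"
proof (cases "x \<in> {0..1}")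
  case False
  then show ?thesis by (auto simp: cell_def intro!: sum.neutral)
qed (use sum_cells[of x "\<lambda>_. 1"] in simp)

lemma integrable_on_block:
  fixes F :: "real \<times> real \<Rightarrow> real"
  assumes [measurable]: "F \<in> borel_measurable plane"
    and bound: "\<And>x y. x \<in> {0..1} \<Longrightarrow> y \<in> {0..1} \<Longrightarrow> \<bar>F (x, y)\<bar> \<le> 1"
  shows "integrable plane (\<lambda>p. indicator (cell a \<times> cell b) p * F p)"
proof (rule integrable_indicator_times_bounded[where K = 1])
  show "\<bar>F p\<bar> \<le> 1" if "p \<in> cell a \<times> cell b" for p
    using bound block_subset[OF that] by (cases p) auto
qed (fact block_sets, fact assms(1), simp add: emeasure_block)

definition block_mass :: "'a \<Rightarrow> 'a \<Rightarrow> real" where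
  "block_mass a b = (\<integral>p. indicator (cell a \<times> cell b) p * g (fst p) (snd p) \<partial>plane)"

definition block_avg :: "'a \<Rightarrow> 'a \<Rightarrow> real" where
  "block_avg a b = block_mass a b / measure plane (cell a \<times> cell b)"

lemma integrable_g_block: "integrable plane (\<lambda>p. indicator (cell a \<times> cell b) p * g (fst p) (snd p))"
  using g_range by (intro integrable_on_block) auto

lemma block_mass_bounds: "0 \<le> block_mass a b" "block_mass a b \<le> cell_size a * cell_size b"
proof -
  show "0 \<le> block_mass a b"
    unfolding block_mass_def using block_subset g_range
    by (intro Bochner_Integration.integral_nonneg) (auto simp: indicator_def)
  have "block_mass a b \<le> (\<integral>p. indicator (cell a \<times> cell b) p \<partial>plane)"
    unfolding block_mass_def
  proof (rule integral_mono[OF integrable_g_block])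
    show "integrable plane (indicator (cell a \<times> cell b) :: _ \<Rightarrow> real)"
      by (intro integrable_real_indicator block_sets) (simp add: emeasure_block)
    show "indicator (cell a \<times> cell b) p * g (fst p) (snd p) \<le> indicator (cell a \<times> cell b) p" for p
      using block_subset[of p] g_range by (auto simp: indicator_def)
  qed
  also have "\<dots> = cell_size a * cell_size b"
    by (simp add: measure_block space_pair_measure)
  finally show "block_mass a b \<le> cell_size a * cell_size b" .
qed

lemma block_avg_range: "0 \<le> block_avg a b" "block_avg a b \<le> 1"
proof -
  have "0 \<le> cell_size a * cell_size b"
    using cell_size_nonneg by simp
  then show "0 \<le> block_avg a b" "block_avg a b \<le> 1"
    using block_mass_bounds[of a b]
    by (auto simp: block_avg_def measure_block divide_le_eq_1 le_less)
qed

(* Symmetry of g makes the block masses symmetric: reflect the plane in the diagonal. *)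
lemma block_mass_sym: "block_mass a b = block_mass b a"
proof -
  have "block_mass b a = (\<integral>(x, y). indicator (cell b \<times> cell a) (y, x) * g y x \<partial>plane)"
    using lborel_pair.integral_product_swap[of "\<lambda>p. indicator (cell b \<times> cell a) p * g (fst p) (snd p)"]
    unfolding block_mass_def by (simp add: split_beta')
  also have "\<dots> = block_mass a b"
    unfolding block_mass_def
  proof (rule Bochner_Integration.integral_cong[OF refl], clarify)
    fix x y :: real
    show "indicator (cell b \<times> cell a) (y, x) * g y x = indicator (cell a \<times> cell b) (x, y) * g (fst (x, y)) (snd (x, y))"
      using block_subset[of "(x, y)" a b] g_sym[of x y] by (auto simp: indicator_def)
  qed
  finally show ?thesis ..
qed

lemma block_avg_sym: "block_avg a b = block_avg b a"
  by (simp add: block_avg_def block_mass_sym measure_block mult.commute)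

definition step_graphon :: "real \<Rightarrow> real \<Rightarrow> real" where
  "step_graphon x y =
     (\<Sum>a\<in>labels. \<Sum>b\<in>labels. indicator (cell a) x * indicator (cell b) y * block_avg a b)"

lemma step_graphon_row:
  "x \<in> {0..1} \<Longrightarrow> step_graphon x y = (\<Sum>b\<in>labels. indicator (cell b) y * block_avg (lab x) b)"
  unfolding step_graphon_def
  using sum_cells[of x "\<lambda>a. \<Sum>b\<in>labels. indicator (cell b) y * block_avg a b"]
  by (simp add: sum_distrib_left mult.assoc)

lemma step_graphon_eq:
  "x \<in> {0..1} \<Longrightarrow> y \<in> {0..1} \<Longrightarrow> step_graphon x y = block_avg (lab x) (lab y)"
  using step_graphon_row sum_cells[of y "block_avg (lab x)"] by (simp add: mult.commute)

lemma step_graphon_measurable[measurable]: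
  "(\<lambda>p. step_graphon (fst p) (snd p)) \<in> borel_measurable plane"
  unfolding step_graphon_def by measurable

lemma graphon_step_graphon: "graphon step_graphon"
  unfolding graphon_def
  using step_graphon_measurable step_graphon_eq block_avg_range block_avg_sym
  by (auto simp: split_beta')

lemma integral_square_as_blocks:
  fixes F :: "real \<times> real \<Rightarrow> real"
  assumes [measurable]: "F \<in> borel_measurable plane"
    and bound: "\<And>x y. x \<in> {0..1} \<Longrightarrow> y \<in> {0..1} \<Longrightarrow> \<bar>F (x, y)\<bar> \<le> 1"
  shows "(\<integral>p. indicator ({0..1} \<times> {0..1}) p * F p \<partial>plane)
       = (\<Sum>a\<in>labels. \<Sum>b\<in>labels. \<integral>p. indicator (cell a \<times> cell b) p * F p \<partial>plane)"
proof -
  have square: "indicator ({0..1} \<times> {0..1}) p = (\<Sum>a\<in>labels. \<Sum>b\<in>labels. indicator (cell a \<times> cell b) p :: real)" for p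
    by (simp add: indicator_times sum_indicator_cells[symmetric] sum_product)
  note int = integrable_on_block[OF assms]
  have "(\<integral>p. indicator ({0..1} \<times> {0..1}) p * F p \<partial>plane)
      = (\<integral>p. (\<Sum>a\<in>labels. \<Sum>b\<in>labels. indicator (cell a \<times> cell b) p * F p) \<partial>plane)"
    by (simp add: square sum_distrib_right)
  also have "\<dots> = (\<Sum>a\<in>labels. \<integral>p. (\<Sum>b\<in>labels. indicator (cell a \<times> cell b) p * F p) \<partial>plane)"
    using int by (intro Bochner_Integration.integral_sum) auto
  also have "\<dots> = (\<Sum>a\<in>labels. \<Sum>b\<in>labels. \<integral>p. indicator (cell a \<times> cell b) p * F p \<partial>plane)"
    using int by (intro sum.cong refl Bochner_Integration.integral_sum) auto
  finally show ?thesis .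
qed

lemma twice_entropy_as_blocks:
  assumes "graphon h"
  shows "2 * entropy h
       = (\<Sum>a\<in>labels. \<Sum>b\<in>labels. \<integral>p. indicator (cell a \<times> cell b) p * S_ent (h (fst p) (snd p)) \<partial>plane)"
proof -
  have "2 * entropy h = (\<integral>p. indicator ({0..1} \<times> {0..1}) p * S_ent (h (fst p) (snd p)) \<partial>plane)"
    unfolding entropy_def set_lebesgue_integral_def by simp
  also have "\<dots> = (\<Sum>a\<in>labels. \<Sum>b\<in>labels. \<integral>p. indicator (cell a \<times> cell b) p * S_ent (h (fst p) (snd p)) \<partial>plane)"
  proof (rule integral_square_as_blocks)
    show "(\<lambda>p. S_ent (h (fst p) (snd p))) \<in> borel_measurable plane"
      using graphon_measurable[OF assms] by measurable
    show "\<bar>S_ent (h (fst (x, y)) (snd (x, y)))\<bar> \<le> 1" if "x \<in> {0..1}" "y \<in> {0..1}" for x y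
      using assms that S_ent_nonneg S_ent_le_one unfolding graphon_def by simp
  qed
  finally show ?thesis .
qed

lemma twice_entropy_step_graphon:
  "2 * entropy step_graphon
     = (\<Sum>a\<in>labels. \<Sum>b\<in>labels. measure plane (cell a \<times> cell b) * S_ent (block_avg a b))"
  unfolding twice_entropy_as_blocks[OF graphon_step_graphon]
proof (intro sum.cong refl)
  fix a b
  have "(\<integral>p. indicator (cell a \<times> cell b) p * S_ent (step_graphon (fst p) (snd p)) \<partial>plane)
      = (\<integral>p. indicator (cell a \<times> cell b) p * S_ent (block_avg a b) \<partial>plane)"
  proof (rule Bochner_Integration.integral_cong[OF refl])
    fix p :: "real \<times> real"
    show "indicator (cell a \<times> cell b) p * S_ent (step_graphon (fst p) (snd p))
        = indicator (cell a \<times> cell b) p * S_ent (block_avg a b)"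
      using block_subset[of p a b] step_graphon_eq by (auto simp: indicator_def cell_def mem_Times_iff)
  qed
  also have "\<dots> = measure plane (cell a \<times> cell b) * S_ent (block_avg a b)"
    by (simp add: space_pair_measure)
  finally show "(\<integral>p. indicator (cell a \<times> cell b) p * S_ent (step_graphon (fst p) (snd p)) \<partial>plane)
      = measure plane (cell a \<times> cell b) * S_ent (block_avg a b)" .
qed

lemma block_entropy_jensen:
  shows "(\<integral>p. indicator (cell a \<times> cell b) p * S_ent (g (fst p) (snd p)) \<partial>plane)
           \<le> measure plane (cell a \<times> cell b) * S_ent (block_avg a b)"
    and "(\<integral>p. indicator (cell a \<times> cell b) p * S_ent (g (fst p) (snd p)) \<partial>plane)
           = measure plane (cell a \<times> cell b) * S_ent (block_avg a b) \<Longrightarrow>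
         AE p in plane. p \<in> cell a \<times> cell b \<longrightarrow> g (fst p) (snd p) = block_avg a b"
  using entropy_jensen_block[OF block_sets g_measurable _ _ block_avg_def[unfolded block_mass_def]]
    block_subset g_range by (auto simp: emeasure_block)

(* If averaging does not increase the entropy, each block inequality is an equality,
   so g is almost everywhere equal to its average on every block. *)
lemma ae_block_constant_if_entropy_not_increased:
  assumes "entropy step_graphon \<le> entropy g" and "a \<in> labels" "b \<in> labels"
  shows "AE p in plane. p \<in> cell a \<times> cell b \<longrightarrow> g (fst p) (snd p) = block_avg a b"
proof (rule block_entropy_jensen(2))
  define gap where "gap a b = measure plane (cell a \<times> cell b) * S_ent (block_avg a b)
      - (\<integral>p. indicator (cell a \<times> cell b) p * S_ent (g (fst p) (snd p)) \<partial>plane)" for a b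
  have gap_nonneg: "0 \<le> gap a b" for a b
    using block_entropy_jensen(1)[of a b] by (simp add: gap_def)
  have "(\<Sum>a\<in>labels. \<Sum>b\<in>labels. gap a b) = 2 * entropy step_graphon - 2 * entropy g"
    unfolding gap_def twice_entropy_as_blocks[OF graphon] twice_entropy_step_graphon
    by (simp add: sum_subtractf)
  then have "(\<Sum>a\<in>labels. \<Sum>b\<in>labels. gap a b) = 0"
    using assms(1) gap_nonneg sum_nonneg[of labels "\<lambda>a. \<Sum>b\<in>labels. gap a b"]
    by (simp add: sum_nonneg)
  then have "gap a b = 0"
    using assms(2,3) finite_labels gap_nonneg by (auto simp: sum_nonneg_eq_0_iff sum_nonneg)
  then show "(\<integral>p. indicator (cell a \<times> cell b) p * S_ent (g (fst p) (snd p)) \<partial>plane)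
      = measure plane (cell a \<times> cell b) * S_ent (block_avg a b)"
    by (simp add: gap_def)
qed

lemma row_block_mass:
  "(\<Sum>b\<in>labels. block_mass a b) = (\<integral>x. indicator (cell a) x * degree_fun g x \<partial>lborel)"
proof -
  have row_int: "integrable plane (\<lambda>p. indicator (cell a \<times> {0..1}) p * g (fst p) (snd p))"
  proof (rule integrable_indicator_times_bounded[where K = 1])
    show "\<bar>g (fst p) (snd p)\<bar> \<le> 1" if "p \<in> cell a \<times> {0..1}" for p
      using that cell_subset g_range by (auto simp: mem_Times_iff subset_iff)
    have "emeasure plane (cell a \<times> {0..1}) \<le> emeasure plane ({0..1::real} \<times> {0..1::real})"
      using cell_subset by (intro emeasure_mono) auto
    also have "\<dots> < \<infinity>"
      by (simp add: lborel.emeasure_pair_measure_Times)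
    finally show "emeasure plane (cell a \<times> {0..1}) < \<infinity>" .
  qed simp_all
  have "(\<Sum>b\<in>labels. block_mass a b)
      = (\<integral>p. (\<Sum>b\<in>labels. indicator (cell a \<times> cell b) p * g (fst p) (snd p)) \<partial>plane)"
    unfolding block_mass_def using integrable_g_block by (simp add: Bochner_Integration.integral_sum)
  also have "\<dots> = (\<integral>p. indicator (cell a \<times> {0..1}) p * g (fst p) (snd p) \<partial>plane)"
    by (simp add: indicator_times sum_distrib_left sum_distrib_right mult.assoc
        flip: sum_indicator_cells)
  also have "\<dots> = (\<integral>x. (\<integral>y. indicator (cell a) x * (indicator {0..1} y * g x y) \<partial>lborel) \<partial>lborel)"
    using lborel_pair.integral_fst'[OF row_int] by (simp add: indicator_times mult.assoc)
  also have "\<dots> = (\<integral>x. indicator (cell a) x * degree_fun g x \<partial>lborel)"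
    by (simp add: degree_fun_eq)
  finally show ?thesis .
qed

lemma degree_step_graphon:
  assumes "x \<in> cell a" and "0 < cell_size a"
  shows "degree_fun step_graphon x = (\<integral>y. indicator (cell a) y * degree_fun g y \<partial>lborel) / cell_size a"
proof -
  have x: "x \<in> {0..1}" "lab x = a"
    using assms(1) by (auto simp: cell_def)
  have avg: "cell_size b * block_avg a b = block_mass a b / cell_size a" for b
  proof (cases "cell_size b = 0")
    case True
    then have "block_mass a b = 0"
      using block_mass_bounds[of a b] by simp
    with True show ?thesis by simp
  qed (use assms(2) in \<open>simp add: block_avg_def measure_block field_simps\<close>)
  have "degree_fun step_graphon x = (\<integral>y. (\<Sum>b\<in>labels. indicator (cell b) y * block_avg a b) \<partial>lborel)"
    unfolding degree_fun_eq
  proof (rule Bochner_Integration.integral_cong[OF refl])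
    fix y
    show "indicator {0..1} y * step_graphon x y = (\<Sum>b\<in>labels. indicator (cell b) y * block_avg a b)"
      using step_graphon_row[OF x(1)] x(2) cell_subset
      by (cases "y \<in> {0..1}") (auto simp: indicator_def subset_iff intro!: sum.neutral)
  qed
  also have "\<dots> = (\<Sum>b\<in>labels. cell_size b * block_avg a b)"
    using emeasure_cell
    by (subst Bochner_Integration.integral_sum) (auto simp: cell_size_def intro!: integrable_real_indicator)
  also have "\<dots> = (\<Sum>b\<in>labels. block_mass a b) / cell_size a"
    by (simp add: avg sum_divide_distrib)
  finally show ?thesis
    by (simp add: row_block_mass)
qed

(* If the degree function of g is constant on every cell, then averaging over blocks
   preserves the degree function almost everywhere (cells of measure zero are negligible). *)
lemma degree_step_graphon_ae:
  assumes degree_const: "\<And>x y. x \<in> {0..1} \<Longrightarrow> y \<in> {0..1} \<Longrightarrow> lab x = lab y \<Longrightarrow>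
      degree_fun g x = degree_fun g y"
  shows "AE x in lborel. x \<in> {0..1} \<longrightarrow> degree_fun step_graphon x = degree_fun g x"
proof -
  have "AE x in lborel. \<forall>a\<in>labels. x \<in> cell a \<longrightarrow> degree_fun step_graphon x = degree_fun g x"
  proof (rule AE_finite_allI[OF finite_labels])
    fix a
    show "AE x in lborel. x \<in> cell a \<longrightarrow> degree_fun step_graphon x = degree_fun g x"
    proof (cases "cell_size a = 0")
      case True
      then have "cell a \<in> null_sets lborel"
        using emeasure_cell[of a] by (simp add: null_sets_def)
      from AE_not_in[OF this] show ?thesis
        by (rule AE_mp) (rule AE_I2, blast)
    next
      case False
      then have pos: "0 < cell_size a"
        using cell_size_nonneg[of a] by simp
      show ?thesis
      proof (intro AE_I2 impI)
        fix x assume x: "x \<in> cell a"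
        have "indicator (cell a) y * degree_fun g y = indicator (cell a) y * degree_fun g x" for y
          using x degree_const[of y x] by (cases "y \<in> cell a") (simp_all add: cell_def)
        then have "(\<integral>y. indicator (cell a) y * degree_fun g y \<partial>lborel)
            = (\<integral>y. indicator (cell a) y * degree_fun g x \<partial>lborel)"
          by (rule Bochner_Integration.integral_cong[OF refl])
        also have "\<dots> = cell_size a * degree_fun g x"
          by (simp add: cell_size_def)
        finally show "degree_fun step_graphon x = degree_fun g x"
          using degree_step_graphon[OF x pos] pos by simp
      qed
    qed
  qed
  then show ?thesis
    by (rule AE_mp) (rule AE_I2, auto simp: cell_def)
qed

lemma podal_if_block_constant:
  assumes "\<forall>a\<in>labels. \<forall>b\<in>labels. \<exists>c. AE p in plane.
             fst p \<in> cell a \<and> snd p \<in> cell b \<longrightarrow> g (fst p) (snd p) = c"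
  shows "podal (card labels) g"
proof -
  obtain e where e: "bij_betw e {..<card labels} labels"
    using ex_bij_betw_nat_finite[OF finite_labels] by (auto simp: atLeast0LessThan)
  then have e_in: "i < card labels \<Longrightarrow> e i \<in> labels" for i
    by (auto simp: bij_betw_def)
  show ?thesis
    unfolding podal_def
  proof (intro exI[of _ "card labels"] exI[of _ "\<lambda>i. cell (e i)"] conjI allI impI order_refl)
    show "cell (e i) \<in> sets lebesgue" for i
      using cell_sets[of "e i"] by simp
    have "(\<Union>i<card labels. cell (e i)) = (\<Union>a\<in>e ` {..<card labels}. cell a)"
      by simp
    also have "\<dots> = (\<Union>a\<in>labels. cell a)"
      using e by (simp add: bij_betw_def)
    also have "\<dots> = {0..1}"
      by (auto simp: cell_def)
    finally show "(\<Union>i<card labels. cell (e i)) = {0..1}" .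
    show "cell (e i) \<inter> cell (e j) = {}" if "i < card labels" "j < card labels" "i \<noteq> j" for i j
      using e that by (auto simp: bij_betw_def inj_on_def cell_def)
    show "\<exists>c. AE p in plane. fst p \<in> cell (e i) \<and> snd p \<in> cell (e j) \<longrightarrow> g (fst p) (snd p) = c"
      if "i < card labels" "j < card labels" for i j
      using assms e_in[OF that(1)] e_in[OF that(2)] by blast
  qed
qed

end

theorem proposition3p2:
  fixes g :: "real \<Rightarrow> real \<Rightarrow> real" and M :: nat
  assumes "graphon g"
    and "\<And>h. graphon h \<Longrightarrow>
           (AE x in lborel. x \<in> {0..1} \<longrightarrow> degree_fun h x = degree_fun g x) \<Longrightarrow>
           entropy h \<le> entropy g"
    and "finite (degree_fun g ` {0..1})"
    and "card (degree_fun g ` {0..1}) = M"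
  shows "podal M g \<and>
    (\<forall>a\<in>degree_fun g ` {0..1}. \<forall>b\<in>degree_fun g ` {0..1}. \<exists>c.
       AE p in lborel \<Otimes>\<^sub>M lborel.
         fst p \<in> {x\<in>{0..1}. degree_fun g x = a} \<and> snd p \<in> {x\<in>{0..1}. degree_fun g x = b}
         \<longrightarrow> g (fst p) (snd p) = c)"
proof -
  note degree_measurable[measurable] = degree_fun_measurable[OF assms(1)]
  interpret labelled_graphon g "degree_fun g"
    using assms(1,3) by unfold_locales simp_all
  \<comment> \<open>Averaging over the level sets of the degree function keeps the degrees, so by
    maximality it cannot increase the entropy.\<close>
  have no_gain: "entropy step_graphon \<le> entropy g"
    by (rule assms(2)[OF graphon_step_graphon degree_step_graphon_ae]) simp
  have block_constant: "\<forall>a\<in>labels. \<forall>b\<in>labels. \<exists>c. AE p in plane.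
      fst p \<in> cell a \<and> snd p \<in> cell b \<longrightarrow> g (fst p) (snd p) = c"
  proof (intro ballI)
    fix a b assume "a \<in> labels" "b \<in> labels"
    from ae_block_constant_if_entropy_not_increased[OF no_gain this]
    show "\<exists>c. AE p in plane. fst p \<in> cell a \<and> snd p \<in> cell b \<longrightarrow> g (fst p) (snd p) = c"
      by (intro exI[of _ "block_avg a b"]) (simp add: mem_Times_iff)
  qed
  have "podal M g"
    using podal_if_block_constant[OF block_constant] assms(4) by simp
  then show ?thesis
    using block_constant unfolding cell_def by (intro conjI)
qed

end
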